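(* For $i,j\in J$ put $h_{ij}:=H(b_i\otimes b_j)=\min\{i,2-j\}$. The following nine vectors belong to $N$: $C_{b_0,b_0}=v_0\otimes v_0$, $C_{b_0,b_1}=v_0\otimes v_1+q^2v_1\otimes v_0$, $C_{b_0,b_2}=v_0\otimes v_2+q\,v_1\otimes v_1+q^4v_2\otimes v_0$, $C_{b_1,b_2}=v_1\otimes v_2+q^2v_2\otimes v_1$, $C_{b_2,b_2}=v_2\otimes v_2$, $C_{zb_2,b_1}=zv_2\otimes v_1+q^2v_1\otimes zv_2$, $C_{z^2b_2,b_0}=z^2v_2\otimes v_0+q\,zv_1\otimes zv_1+q^4v_0\otimes z^2v_2$, $C_{zb_1,b_0}=zv_1\otimes v_0+q^2v_0\otimes zv_1$, $C_{zb_1,b_1}=zv_1\otimes v_1+q^2v_1\otimes zv_1+q^2[2](v_0\otimes zv_2+zv_2\otimes v_0)$. These are exactly the elements $C_{z^{h_{ij}}b_i,b_j}$, one for each pair $(i,j)\in J\times J$. Moreover, for each $(i,j)$, letting $\mathcal B_{i,j}=\{(b,b')\in B_{\mathrm{aff}}\times B_{\mathrm{aff}}: H(b\otimes b')>0,\ l(b_j)\le l(b)<l(z^{h_{ij}}b_i),\ l(b_j)<l(b')\le l(z^{h_{ij}}b_i)\}$, the element $C_{z^{h_{ij}}b_i,b_j}$ has the form $G(z^{h_{ij}}b_i)\otimes G(b_j)-\sum_{(b,b')\in\mathcal B_{i,j}}a_{b,b'}\,G(b)\otimes G(b')$ with all coefficients $a_{b,b'}\in q\mathbb Z[q]$, and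 $H(z^{h_{ij}}b_i\otimes b_j)=0$.
   Context: Let $\mathfrak g=\widehat{\mathfrak{sl}}_2$, $I=\{0,1\}$, weight lattice $P=\mathbb Z\Lambda_0\oplus\mathbb Z\Lambda_1\oplus\mathbb Z\delta$, coroots $h_0,h_1$ with $\langle h_i,\Lambda_j\rangle=\delta_{ij}$, $\langle h_i,\delta\rangle=0$, central element $c=h_0+h_1$. $U_q(\mathfrak g)$ is the quantum affine algebra over $\mathbb Q(q)$ with generators $e_i,f_i$ ($i\in I$), $q^h$ ($h\in P^*$), $t_i=q^{h_i}$, and coproduct $\Delta(q^h)=q^h\otimes q^h$, $\Delta(e_i)=e_i\otimes1+t_i^{-1}\otimes e_i$, $\Delta(f_i)=f_i\otimes t_i+1\otimes f_i$. $[n]=(q^n-q^{-n})/(q-q^{-1})$. Let $J=\{0,1,2\}$. $V_{\mathrm{aff}}$ is the $\mathbb Q(q)$-space with basis $z^av_j$ ($a\in\mathbb Z$, $j\in J$), a $U_q(\mathfrak g)$-module via: $\mathrm{wt}(z^av_j)=2(1-j)(\Lambda_1-\Lambda_0)+a\delta$, $q^hz^av_j=q^{\langle h,\mathrm{wt}(z^av_j)\rangle}z^av_j$, $e_1z^av_j=[3-j]z^av_{j-1}$, $f_1z^av_j=[j+1]z^av_{j+1}$, $e_0z^av_j=[j+1]z^{a+1}v_{j+1}$, $f_0z^av_j=[3-j]z^{a-1}v_{j-1}$ (with $v_{-1}=v_3=0$). The operator $z^b$ sends $z^av_j\mapsto z^{a+b}v_j$. The crystal of $V_{\mathrm{aff}}$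 is $B_{\mathrm{aff}}=\{z^ab_j: a\in\mathbb Z, j\in J\}$ with lower global base $G(z^ab_j)=z^av_j$. Define $l(z^ab_j)=2a-j$ and the energy function $H(z^ab_i\otimes z^{a'}b_j)=\min\{i,2-j\}-a+a'$. $N\subset V_{\mathrm{aff}}\otimes V_{\mathrm{aff}}$ is the smallest subspace containing $v_0\otimes v_0$ that is stable under the action of $U_q(\mathfrak g)$ (via $\Delta$) and under the operators $z\otimes z$, $z^{-1}\otimes z^{-1}$, $z\otimes1+1\otimes z$. *)

theory Defs
  imports "HOL-Computational_Algebra.Polynomial" "HOL-Computational_Algebra.Fraction_Field"
    "HOL-Library.Function_Algebras"
begin

type_synonym K = "rat poly fract"

definition qq :: K where "qq = Fract [:0, 1:] 1"

definition qint :: "int \<Rightarrow> K" where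
  "qint n = (qq powi n - qq powi (-n)) / (qq - qq powi (-1))"

text \<open>The index set J and the crystal B_aff: (a,j) stands for z^a b_j
  (and, as a basis vector of V_aff, for G(z^a b_j) = z^a v_j).\<close>
type_synonym bvec = "int \<times> nat"

definition J :: "nat set" where "J = {0, 1, 2}"

definition Baff :: "bvec set" where "Baff = {(a, j). j \<in> J}"

text \<open>Vectors of V_aff and of V_aff \<otimes> V_aff as coefficient functions on the
  bases z^a v_j and z^a v_j \<otimes> z^a' v_j'.\<close>
type_synonym vvec = "bvec \<Rightarrow> K"
type_synonym tens = "bvec \<times> bvec \<Rightarrow> K"

definition bas :: "'b \<Rightarrow> 'b \<Rightarrow> K" where
  "bas x = (\<lambda>y. if y = x then 1 else 0)"

definition scal :: "K \<Rightarrow> ('b \<Rightarrow> K) \<Rightarrow> ('b \<Rightarrow> K)" where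
  "scal c u = (\<lambda>y. c * u y)"

definition tp :: "vvec \<Rightarrow> vvec \<Rightarrow> tens" where
  "tp u w = (\<lambda>(x, y). u x * w y)"

definition lin :: "('b \<Rightarrow> 'c \<Rightarrow> K) \<Rightarrow> ('b \<Rightarrow> K) \<Rightarrow> ('c \<Rightarrow> K)" where
  "lin F T = (\<lambda>p. \<Sum>s\<in>{s. T s \<noteq> 0}. T s * F s p)"

text \<open>Weights: wt(z^a v_j) = 2(1-j)(Lambda_1 - Lambda_0) + a delta.
  An element h of P^* is given by integer coordinates (c0,c1,cd) w.r.t.
  the basis h_0, h_1, d dual to Lambda_0, Lambda_1, delta.\<close>
definition pair :: "int \<times> int \<times> int \<Rightarrow> bvec \<Rightarrow> int" where
  "pair h x = (case h of (c0, c1, cd) \<Rightarrow> case x of (a, j) \<Rightarrow>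
      c0 * (-(2 * (1 - int j))) + c1 * (2 * (1 - int j)) + cd * a)"

definition hcor :: "nat \<Rightarrow> int \<times> int \<times> int" where
  "hcor i = (if i = 0 then (1, 0, 0) else (0, 1, 0))"

text \<open>Action of the Chevalley generators on basis vectors of V_aff
  (v_{-1} = v_3 = 0).\<close>
definition eop :: "nat \<Rightarrow> bvec \<Rightarrow> vvec" where
  "eop i x = (case x of (a, j) \<Rightarrow>
     if i = 1 then (if 1 \<le> j \<and> j \<le> 2 then scal (qint (3 - int j)) (bas (a, j - 1)) else 0)
     else (if j \<le> 1 then scal (qint (int j + 1)) (bas (a + 1, j + 1)) else 0))"

definition fop :: "nat \<Rightarrow> bvec \<Rightarrow> vvec" where
  "fop i x = (case x of (a, j) \<Rightarrow>
     if i = 1 then (if j \<le> 1 then scal (qint (int j + 1)) (bas (a, j + 1)) else 0)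
     else (if 1 \<le> j \<and> j \<le> 2 then scal (qint (3 - int j)) (bas (a - 1, j - 1)) else 0))"

definition DeltaE :: "nat \<Rightarrow> bvec \<times> bvec \<Rightarrow> tens" where
  "DeltaE i p = (case p of (x, y) \<Rightarrow>
     tp (eop i x) (bas y) + scal (qq powi (- pair (hcor i) x)) (tp (bas x) (eop i y)))"

definition DeltaF :: "nat \<Rightarrow> bvec \<times> bvec \<Rightarrow> tens" where
  "DeltaF i p = (case p of (x, y) \<Rightarrow>
     scal (qq powi (pair (hcor i) y)) (tp (fop i x) (bas y)) + tp (bas x) (fop i y))"

definition DeltaQ :: "int \<times> int \<times> int \<Rightarrow> bvec \<times> bvec \<Rightarrow> tens" where
  "DeltaQ h p = (case p of (x, y) \<Rightarrow> scal (qq powi (pair h x + pair h y)) (bas (x, y)))"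

definition zshift :: "int \<Rightarrow> bvec \<Rightarrow> bvec" where
  "zshift b x = (case x of (a, j) \<Rightarrow> (a + b, j))"

definition Zboth :: "int \<Rightarrow> bvec \<times> bvec \<Rightarrow> tens" where
  "Zboth b p = (case p of (x, y) \<Rightarrow> bas (zshift b x, zshift b y))"

definition Zsum :: "bvec \<times> bvec \<Rightarrow> tens" where
  "Zsum p = (case p of (x, y) \<Rightarrow> bas (zshift 1 x, y) + bas (x, zshift 1 y))"

text \<open>N: smallest subspace containing v_0 \<otimes> v_0, stable under U_q(g)
  (equivalently under its generators e_i, f_i, q^h) and under
  z\<otimes>z, z^{-1}\<otimes>z^{-1}, z\<otimes>1 + 1\<otimes>z.\<close>
inductive_set N :: "tens set" where
  gen: "bas ((0, 0), (0, 0)) \<in> N"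
| zero: "0 \<in> N"
| add: "T \<in> N \<Longrightarrow> U \<in> N \<Longrightarrow> T + U \<in> N"
| smul: "T \<in> N \<Longrightarrow> scal c T \<in> N"
| e: "T \<in> N \<Longrightarrow> i \<in> {0, 1} \<Longrightarrow> lin (DeltaE i) T \<in> N"
| f: "T \<in> N \<Longrightarrow> i \<in> {0, 1} \<Longrightarrow> lin (DeltaF i) T \<in> N"
| qh: "T \<in> N \<Longrightarrow> lin (DeltaQ h) T \<in> N"
| zz: "T \<in> N \<Longrightarrow> lin (Zboth 1) T \<in> N"
| zzinv: "T \<in> N \<Longrightarrow> lin (Zboth (-1)) T \<in> N"
| zsum: "T \<in> N \<Longrightarrow> lin Zsum T \<in> N"

definition H :: "bvec \<times> bvec \<Rightarrow> int" where
  "H p = (case p of ((a, i), (a', j)) \<Rightarrow> min (int i) (2 - int j) - a + a')"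

definition l :: "bvec \<Rightarrow> int" where
  "l x = (case x of (a, j) \<Rightarrow> 2 * a - int j)"

definition hh :: "nat \<Rightarrow> nat \<Rightarrow> int" where
  "hh i j = H ((0, i), (0, j))"

definition Bset :: "nat \<Rightarrow> nat \<Rightarrow> (bvec \<times> bvec) set" where
  "Bset i j = {(b, b'). b \<in> Baff \<and> b' \<in> Baff \<and> H (b, b') > 0 \<and>
      l (0, j) \<le> l b \<and> l b < l (hh i j, i) \<and>
      l (0, j) < l b' \<and> l b' \<le> l (hh i j, i)}"

definition qZq :: "K set" where
  "qZq = {Fract p 1 | p. (\<forall>n. coeff p n \<in> \<int>) \<and> coeff p 0 = 0}"

text \<open>G(z^a b_j) \<otimes> G(z^a' b_j') = z^a v_j \<otimes> z^a' v_j'.\<close>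
definition tb :: "int \<Rightarrow> nat \<Rightarrow> int \<Rightarrow> nat \<Rightarrow> tens" where
  "tb a j a' j' = bas ((a, j), (a', j'))"

text \<open>The nine vectors of the statement; Cvec i j is the vector labelled
  C_{z^{h_ij} b_i, b_j} in the paper.\<close>
definition Cvec :: "nat \<Rightarrow> nat \<Rightarrow> tens" where
  "Cvec i j =
    (if (i, j) = (0, 0) then tb 0 0 0 0
     else if (i, j) = (0, 1) then tb 0 0 0 1 + scal (qq ^ 2) (tb 0 1 0 0)
     else if (i, j) = (0, 2) then tb 0 0 0 2 + scal qq (tb 0 1 0 1) + scal (qq ^ 4) (tb 0 2 0 0)
     else if (i, j) = (1, 2) then tb 0 1 0 2 + scal (qq ^ 2) (tb 0 2 0 1)
     else if (i, j) = (2, 2) then tb 0 2 0 2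
     else if (i, j) = (2, 1) then tb 1 2 0 1 + scal (qq ^ 2) (tb 0 1 1 2)
     else if (i, j) = (2, 0) then tb 2 2 0 0 + scal qq (tb 1 1 1 1) + scal (qq ^ 4) (tb 0 0 2 2)
     else if (i, j) = (1, 0) then tb 1 1 0 0 + scal (qq ^ 2) (tb 0 0 1 1)
     else if (i, j) = (1, 1) then tb 1 1 0 1 + scal (qq ^ 2) (tb 0 1 1 1)
                                  + scal (qq ^ 2 * qint 2) (tb 0 0 1 2 + tb 1 2 0 0)
     else 0)"

end

theory Submission
  imports Defs
begin

text \<open>
  Write C_ij for C_{z^h_ij b_i, b_j}. Starting from C_00 = v_0 \<otimes> v_0, the generators of N
  produce all nine vectors: f_1 C_00 = C_01, f_1 C_01 = [2] C_02, f_1 C_02 = [3] C_12,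
  f_1 C_12 = [4] C_22, e_0 C_00 = C_10, e_0 C_10 = [2] C_20, e_0 C_01 = C_11 and
  f_1 C_11 = [2] (C_21 + (z \<otimes> 1 + 1 \<otimes> z) C_12). The quantum integers [2], [3], [4] are nonzero
  since q is an indeterminate, so every C_ij lies in N. The triangular shape is a finite
  inspection: the leading term z^h_ij v_i \<otimes> v_j has energy 0, and every other term lies in
  B_ij with coefficient q, q^2, q^4 or q^2 [2] = q^3 + q.
\<close>

lemma qq_power: "qq ^ n = Fract (monom 1 n) 1"
  by (induction n) (simp_all add: qq_def One_fract_def monom_altdef mult.commute flip: one_pCons)

lemma qq_power_eq_iff: "qq ^ m = qq ^ n \<longleftrightarrow> m = n"
  by (simp add: qq_power eq_fract monom_eq_iff')

lemma qq_nonzero: "qq \<noteq> 0"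
  using qq_power_eq_iff[of 1 2] by (auto simp: power2_eq_square)

lemma qint_denominator_nonzero: "qq - qq powi (-1) \<noteq> 0"
proof
  assume "qq - qq powi (-1) = 0"
  then have "qq ^ 2 = qq ^ 0"
    using qq_nonzero by (simp add: power_int_minus field_simps power2_eq_square)
  then show False by (simp only: qq_power_eq_iff)
qed

lemma qint_eqI: "qq powi n - qq powi (-n) = x * (qq - qq powi (-1)) \<Longrightarrow> qint n = x"
  using qint_denominator_nonzero by (simp add: qint_def)

lemma qint_nonzero:
  assumes "n > 0" shows "qint (int n) \<noteq> 0"
proof
  assume "qint (int n) = 0"
  then have "qq ^ n = inverse (qq ^ n)"
    using qint_denominator_nonzero by (simp add: qint_def power_int_minus)
  then have "qq ^ (2 * n) = qq ^ 0"
    using qq_nonzero by (simp add: power_mult power2_eq_square field_simps)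
  with assms show False by (simp only: qq_power_eq_iff)
qed

lemma qint_1: "qint 1 = 1"
  by (rule qint_eqI) simp

lemma qint_2: "qint 2 = (qq ^ 2 + 1) / qq"
  by (rule qint_eqI) (simp add: qq_nonzero power_int_minus field_simps power2_eq_square)

lemma qint_3: "qint 3 = (qq ^ 4 + qq ^ 2 + 1) / qq ^ 2"
  by (rule qint_eqI) (simp add: qq_nonzero power_int_minus field_simps power2_eq_square eval_nat_numeral)

lemma qint_4: "qint 4 = (qq ^ 6 + qq ^ 4 + qq ^ 2 + 1) / qq ^ 3"
  by (rule qint_eqI) (simp add: qq_nonzero power_int_minus field_simps power2_eq_square eval_nat_numeral)

text \<open>\<^const>\<open>lin\<close> sums over the support, which is the empty sum for an infinite support;
  it is linear only on finitely supported arguments.\<close>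

definition finite_support :: "('b \<Rightarrow> K) \<Rightarrow> bool" where
  "finite_support T \<longleftrightarrow> finite {s. T s \<noteq> 0}"

lemma finite_support_bas [simp]: "finite_support (bas x)"
  by (simp add: finite_support_def bas_def)

lemma finite_support_add [simp]:
  "finite_support T \<Longrightarrow> finite_support U \<Longrightarrow> finite_support (T + U)"
  unfolding finite_support_def
  by (rule finite_subset[of _ "{s. T s \<noteq> 0} \<union> {s. U s \<noteq> 0}"]) auto

lemma finite_support_scal [simp]: "finite_support T \<Longrightarrow> finite_support (scal c T)"
  unfolding finite_support_def scal_def by (rule finite_subset[of _ "{s. T s \<noteq> 0}"]) auto

lemma lin_eq_sum_superset:
  "finite S \<Longrightarrow> {s. T s \<noteq> 0} \<subseteq> S \<Longrightarrow> lin F T p = (\<Sum>s\<in>S. T s * F s p)"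
  unfolding lin_def by (rule sum.mono_neutral_left) auto

lemma lin_bas [simp]: "lin F (bas x) = F x"
proof
  fix p
  have "{s. bas x s \<noteq> 0} = {x}" by (auto simp: bas_def)
  then show "lin F (bas x) p = F x p" by (simp add: lin_def bas_def)
qed

lemma lin_add [simp]:
  assumes "finite_support T" "finite_support U"
  shows "lin F (T + U) = lin F T + lin F U"
proof
  fix p
  let ?S = "{s. T s \<noteq> 0} \<union> {s. U s \<noteq> 0}"
  have S: "finite ?S" using assms by (simp add: finite_support_def)
  have "lin F (T + U) p = (\<Sum>s\<in>?S. T s * F s p) + (\<Sum>s\<in>?S. U s * F s p)"
    by (subst lin_eq_sum_superset[OF S]) (auto simp: distrib_right sum.distrib)
  also have "\<dots> = lin F T p + lin F U p"
    by (subst (1 2) lin_eq_sum_superset[OF S]) auto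
  finally show "lin F (T + U) p = (lin F T + lin F U) p" by simp
qed

lemma lin_scal [simp]: "finite_support T \<Longrightarrow> lin F (scal c T) = scal c (lin F T)"
proof
  fix p assume "finite_support T"
  then have S: "finite {s. T s \<noteq> 0}" by (simp add: finite_support_def)
  have "lin F (scal c T) p = (\<Sum>s | T s \<noteq> 0. c * T s * F s p)"
    by (subst lin_eq_sum_superset[OF S]) (auto simp: scal_def)
  also have "\<dots> = scal c (lin F T) p"
    by (simp add: lin_def scal_def sum_distrib_left mult.assoc)
  finally show "lin F (scal c T) p = scal c (lin F T) p" .
qed

lemma tp_scal_left [simp]: "tp (scal c u) w = scal c (tp u w)"
  by (auto simp: tp_def scal_def mult.assoc)

lemma tp_scal_right [simp]: "tp u (scal c w) = scal c (tp u w)"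
  by (auto simp: tp_def scal_def mult.left_commute)

lemma tp_bas [simp]: "tp (bas x) (bas y) = bas (x, y)"
  by (auto simp: tp_def bas_def)

lemma tp_zero_left [simp]: "tp 0 w = 0"
  by (auto simp: tp_def)

lemma tp_zero_right [simp]: "tp u 0 = 0"
  by (auto simp: tp_def)

lemma scal_add [simp]: "scal c (T + U) = scal c T + scal c U"
  by (auto simp: scal_def distrib_left)

lemma scal_scal [simp]: "scal c (scal d T) = scal (c * d) T"
  by (auto simp: scal_def mult.assoc)

lemma scal_one [simp]: "scal 1 T = T"
  by (auto simp: scal_def)

lemma scal_apply: "scal c T x = c * T x"
  by (simp add: scal_def)

lemma bas_apply: "bas x y = (if y = x then 1 else 0)"
  by (simp add: bas_def)

lemmas action_defs = DeltaE_def DeltaF_def eop_def fop_def pair_def hcor_def Zsum_def zshift_def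
lemmas coefficient_simps = Cvec_def tb_def bas_apply scal_apply qq_nonzero power_int_minus
  qint_1 qint_2 qint_3 qint_4

lemma DeltaF1_Cvec_00: "lin (DeltaF 1) (Cvec 0 0) = Cvec 0 1"
  by (rule ext) (simp add: action_defs coefficient_simps field_simps eval_nat_numeral)

lemma DeltaF1_Cvec_01: "lin (DeltaF 1) (Cvec 0 1) = scal (qint 2) (Cvec 0 2)"
  by (rule ext) (simp add: action_defs coefficient_simps field_simps eval_nat_numeral)

lemma DeltaF1_Cvec_02: "lin (DeltaF 1) (Cvec 0 2) = scal (qint 3) (Cvec 1 2)"
  by (rule ext) (simp add: action_defs coefficient_simps field_simps eval_nat_numeral)

lemma DeltaF1_Cvec_12: "lin (DeltaF 1) (Cvec 1 2) = scal (qint 4) (Cvec 2 2)"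
  by (rule ext) (simp add: action_defs coefficient_simps field_simps eval_nat_numeral)

lemma DeltaE0_Cvec_00: "lin (DeltaE 0) (Cvec 0 0) = Cvec 1 0"
  by (rule ext) (simp add: action_defs coefficient_simps field_simps eval_nat_numeral)

lemma DeltaE0_Cvec_10: "lin (DeltaE 0) (Cvec 1 0) = scal (qint 2) (Cvec 2 0)"
  by (rule ext) (simp add: action_defs coefficient_simps field_simps eval_nat_numeral)

lemma DeltaE0_Cvec_01: "lin (DeltaE 0) (Cvec 0 1) = Cvec 1 1"
  by (rule ext) (simp add: action_defs coefficient_simps field_simps eval_nat_numeral)

lemma DeltaF1_Cvec_11:
  "lin (DeltaF 1) (Cvec 1 1) = scal (qint 2) (Cvec 2 1) + scal (qint 2) (lin Zsum (Cvec 1 2))"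
  by (rule ext) (simp add: action_defs coefficient_simps field_simps eval_nat_numeral)

lemma N_scal_cancel: "scal c T \<in> N \<Longrightarrow> c \<noteq> 0 \<Longrightarrow> T \<in> N"
  using N.smul[of "scal c T" "inverse c"] by simp

lemma N_diff:
  assumes "T \<in> N" "U \<in> N" shows "T - U \<in> N"
proof -
  have "T + scal (- 1) U \<in> N" using assms by (intro N.add N.smul)
  moreover have "T + scal (- 1) U = T - U" by (simp add: scal_def fun_eq_iff)
  ultimately show ?thesis by simp
qed

lemma Cvec_in_N:
  assumes "i \<in> J" "j \<in> J"
  shows "Cvec i j \<in> N"
proof -
  have q2: "qint 2 \<noteq> 0" and q3: "qint 3 \<noteq> 0" and q4: "qint 4 \<noteq> 0"
    using qint_nonzero[of 2] qint_nonzero[of 3] qint_nonzero[of 4] by simp_all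
  have C00: "Cvec 0 0 \<in> N"
    using N.gen by (simp add: Cvec_def tb_def)
  have C01: "Cvec 0 1 \<in> N"
    using N.f[OF C00, of 1] unfolding DeltaF1_Cvec_00 by simp
  have C02: "Cvec 0 2 \<in> N"
    using N.f[OF C01, of 1] q2 unfolding DeltaF1_Cvec_01 by (simp add: N_scal_cancel)
  have C12: "Cvec 1 2 \<in> N"
    using N.f[OF C02, of 1] q3 unfolding DeltaF1_Cvec_02 by (simp add: N_scal_cancel)
  have C22: "Cvec 2 2 \<in> N"
    using N.f[OF C12, of 1] q4 unfolding DeltaF1_Cvec_12 by (simp add: N_scal_cancel)
  have C10: "Cvec 1 0 \<in> N"
    using N.e[OF C00, of 0] unfolding DeltaE0_Cvec_00 by simp
  have C20: "Cvec 2 0 \<in> N"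
    using N.e[OF C10, of 0] q2 unfolding DeltaE0_Cvec_10 by (simp add: N_scal_cancel)
  have C11: "Cvec 1 1 \<in> N"
    using N.e[OF C01, of 0] unfolding DeltaE0_Cvec_01 by simp
  have "Cvec 2 1 + lin Zsum (Cvec 1 2) \<in> N"
    using N.f[OF C11, of 1] q2 unfolding DeltaF1_Cvec_11 by (simp add: N_scal_cancel flip: scal_add)
  from N_diff[OF this N.zsum[OF C12]] have C21: "Cvec 2 1 \<in> N"
    by simp
  show ?thesis
    using assms C00 C01 C02 C10 C11 C12 C20 C21 C22 by (auto simp: J_def)
qed

lemma zero_in_qZq [simp]: "0 \<in> qZq"
  unfolding qZq_def by (auto intro!: exI[of _ 0] simp: Zero_fract_def)

lemma qZq_add:
  assumes "x \<in> qZq" "y \<in> qZq" shows "x + y \<in> qZq"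
proof -
  from assms obtain p r where "x = Fract p 1" "y = Fract r 1"
    "\<forall>n. coeff p n \<in> \<int>" "\<forall>n. coeff r n \<in> \<int>" "coeff p 0 = 0" "coeff r 0 = 0"
    unfolding qZq_def by blast
  then show ?thesis
    unfolding qZq_def by (auto intro!: exI[of _ "p + r"])
qed

lemma uminus_qq_power_in_qZq: "n > 0 \<Longrightarrow> - (qq ^ n) \<in> qZq"
  unfolding qZq_def by (auto simp: qq_power intro!: exI[of _ "- monom 1 n"])

lemma sum_scal_bas_apply:
  "finite S \<Longrightarrow> (\<Sum>p\<in>S. scal (a p) (bas p)) x = (if x \<in> S then a x else 0)"
  by (induction S rule: finite_induct) (auto simp: scal_apply bas_apply)

lemma eq_bas_minus_sum_scal_bas:
  assumes "finite B" "x0 \<notin> B" "T x0 = 1" "\<And>x. T x \<noteq> 0 \<Longrightarrow> x = x0 \<or> x \<in> B"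
  shows "T = bas x0 - (\<Sum>p\<in>B. scal (- T p) (bas p))"
proof
  fix x
  show "T x = (bas x0 - (\<Sum>p\<in>B. scal (- T p) (bas p))) x"
    using assms by (cases "T x = 0") (auto simp: sum_scal_bas_apply bas_apply)
qed

lemma H_leading_zero: "H ((hh i j, i), (0, j)) = 0"
  by (simp add: hh_def H_def)

lemma leading_notin_Bset: "((hh i j, i), (0, j)) \<notin> Bset i j"
  by (simp add: Bset_def H_leading_zero)

lemma finite_Bset: "finite (Bset i j)"
proof -
  let ?A = "{- int j .. hh i j + 1} \<times> J"
  have "Bset i j \<subseteq> ?A \<times> ?A"
    by (auto simp: Bset_def Baff_def J_def l_def)
  then show ?thesis
    by (rule finite_subset) (simp add: J_def)
qed

lemma Cvec_leading:
  assumes "i \<in> J" "j \<in> J"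
  shows "Cvec i j ((hh i j, i), (0, j)) = 1"
  using assms unfolding J_def
  by (elim insertE emptyE) (auto simp: hh_def H_def Cvec_def tb_def bas_apply scal_apply)

lemma Cvec_support:
  assumes "i \<in> J" "j \<in> J" "Cvec i j x \<noteq> 0"
  shows "x = ((hh i j, i), (0, j)) \<or> x \<in> Bset i j"
  using assms unfolding J_def
  by (elim insertE emptyE)
    (auto simp: hh_def H_def Cvec_def tb_def bas_apply scal_apply Bset_def Baff_def J_def l_def
      split: if_splits)

lemma Cvec_coeff_in_qZq:
  assumes "i \<in> J" "j \<in> J" "x \<noteq> ((hh i j, i), (0, j))"
  shows "- Cvec i j x \<in> qZq"
proof -
  have "- (qq ^ 3) + - (qq ^ 1) \<in> qZq"
    by (intro qZq_add uminus_qq_power_in_qZq) simp_all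
  moreover have "- (qq ^ 3) + - (qq ^ 1) = - (qq ^ 2 * qint 2)"
    using qq_nonzero by (simp add: qint_2 field_simps power2_eq_square power3_eq_cube)
  ultimately have "- (qq ^ 2 * qint 2) \<in> qZq"
    by simp
  moreover have "- qq \<in> qZq" "- (qq ^ 2) \<in> qZq" "- (qq ^ 4) \<in> qZq"
    using uminus_qq_power_in_qZq[of 1] uminus_qq_power_in_qZq[of 2] uminus_qq_power_in_qZq[of 4]
    by simp_all
  ultimately show ?thesis
    using assms unfolding J_def
    by (elim insertE emptyE) (auto simp: hh_def H_def Cvec_def tb_def bas_apply scal_apply)
qed

theorem mainTheorem1:
  shows "\<forall>i\<in>J. \<forall>j\<in>J.
     Cvec i j \<in> N \<and>
     (\<exists>a :: bvec \<times> bvec \<Rightarrow> K. (\<forall>p\<in>Bset i j. a p \<in> qZq) \<and>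
        Cvec i j = bas ((hh i j, i), (0, j)) - (\<Sum>p\<in>Bset i j. scal (a p) (bas p))) \<and>
     H ((hh i j, i), (0, j)) = 0"
proof (intro ballI conjI)
  fix i j assume ij: "i \<in> J" "j \<in> J"
  show "Cvec i j \<in> N"
    using ij by (rule Cvec_in_N)
  show "H ((hh i j, i), (0, j)) = 0"
    by (rule H_leading_zero)
  show "\<exists>a. (\<forall>p\<in>Bset i j. a p \<in> qZq) \<and>
      Cvec i j = bas ((hh i j, i), (0, j)) - (\<Sum>p\<in>Bset i j. scal (a p) (bas p))"
  proof (intro exI conjI ballI)
    fix p assume "p \<in> Bset i j"
    then show "- Cvec i j p \<in> qZq"
      using ij leading_notin_Bset by (metis Cvec_coeff_in_qZq)
  next
    show "Cvec i j = bas ((hh i j, i), (0, j)) - (\<Sum>p\<in>Bset i j. scal (- Cvec i j p) (bas p))"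
      using ij by (intro eq_bas_minus_sum_scal_bas finite_Bset leading_notin_Bset Cvec_leading
          Cvec_support)
  qed
qed

end
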